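(* Let $n=2k$ be a positive even integer, let $f$ be a bent Boolean function on $\mathbb{F}_{2^n}$, and let $a_1,a_2,a_3\in\mathbb{F}_{2^n}$. Put $f_i(x)=f(x)+\mathrm{Tr}^n_1(a_ix)$ for $i=1,2,3$ and $$\sigma=f_1f_2+f_1f_3+f_2f_3=f(x)+\mathrm{Tr}^n_1(a_1x)\mathrm{Tr}^n_1(a_2x)+\mathrm{Tr}^n_1(a_1x)\mathrm{Tr}^n_1(a_3x)+\mathrm{Tr}^n_1(a_2x)\mathrm{Tr}^n_1(a_3x).$$ Then $\sigma$ is bent if and only if $D_{a_1+a_2}D_{a_1+a_3}f^*=0$, and $\sigma$ is semi-bent if and only if $D_{a_1+a_2}D_{a_1+a_3}f^*=1$ (the constant function $1$). If $\sigma$ is bent, then $$\sigma^*(x)=f^*(x+a_1)f^*(x+a_2)+f^*(x+a_1)f^*(x+a_3)+f^*(x+a_2)f^*(x+a_3).$$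
   Context: For a Boolean function $f:\mathbb{F}_{2^n}\to\mathbb{F}_2$, $W_f(a)=\sum_{x}(-1)^{f(x)+\mathrm{Tr}^n_1(ax)}$ with $\mathrm{Tr}^n_1(x)=\sum_{i=0}^{n-1}x^{2^i}$. $f$ is bent if $|W_f(a)|=2^{n/2}$ for all $a$, and its dual $f^*$ is defined by $W_f(a)=2^{n/2}(-1)^{f^*(a)}$. $f$ is semi-bent if $W_f$ takes values in $\{0,\pm2^{n/2+1}\}$. Derivatives: $D_af(x)=f(x)+f(x+a)$ and $D_aD_bf(x)=f(x)+f(x+a)+f(x+b)+f(x+a+b)$. *)

theory Defs
  imports Main
begin

text \<open>The field F_{2^n} is modelled by a finite field type 'a of cardinality 2^n and
characteristic 2. Boolean functions are 'a \<Rightarrow> bool; addition in F_2 is xor (\<noteq>),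
multiplication is conjunction.\<close>

definition tr :: "nat \<Rightarrow> 'a::field \<Rightarrow> 'a" where
  "tr n x = (\<Sum>i<n. x ^ (2 ^ i))"

definition trb :: "nat \<Rightarrow> 'a::field \<Rightarrow> bool" where
  "trb n x = (tr n x = 1)"

definition walsh :: "nat \<Rightarrow> ('a::{field,finite} \<Rightarrow> bool) \<Rightarrow> 'a \<Rightarrow> int" where
  "walsh n f a = (\<Sum>x\<in>UNIV. (-1::int) ^ (of_bool (f x) + of_bool (trb n (a * x))))"

definition bent :: "nat \<Rightarrow> ('a::{field,finite} \<Rightarrow> bool) \<Rightarrow> bool" where
  "bent n f = (\<forall>a. \<bar>walsh n f a\<bar> = 2 ^ (n div 2))"

definition dual :: "nat \<Rightarrow> ('a::{field,finite} \<Rightarrow> bool) \<Rightarrow> 'a \<Rightarrow> bool" where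
  "dual n f a = (walsh n f a = - (2 ^ (n div 2)))"

definition semibent :: "nat \<Rightarrow> ('a::{field,finite} \<Rightarrow> bool) \<Rightarrow> bool" where
  "semibent n f = (\<forall>a. walsh n f a \<in> {0, 2 ^ (n div 2 + 1), - (2 ^ (n div 2 + 1))})"

definition bderiv :: "'a::plus \<Rightarrow> ('a \<Rightarrow> bool) \<Rightarrow> 'a \<Rightarrow> bool" where
  "bderiv a g x = (g x \<noteq> g (x + a))"

end

theory Submission
  imports Defs
begin

text \<open>
  With chi p = (-1)^p, the majority function satisfies
  2 chi(maj(p,q,r)) = chi p + chi q + chi r - chi p chi q chi r, and sigma is the majority of
  f1, f2, f3. Since the trace is additive, this turns into
  2 W_sigma(b) = W_f(b+a1) + W_f(b+a2) + W_f(b+a3) - W_f(b+a1+a2+a3).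
  For bent f each term is 2^k chi(f*(.)), so W_sigma(b) = 2^(k-1) times a signed sum of four
  signs. That sum is +-2 when the four dual values have even parity, and then its sign is
  given by the majority of the first three; otherwise it is 0 or +-4. The parity at b is
  exactly the second derivative D_{a1+a2} D_{a1+a3} f* at b + a1.
\<close>

lemma add_self_char2:
  assumes "(1::'a::comm_ring_1) + 1 = 0"
  shows "(y::'a) + y = 0"
  by (metis assms distrib_left mult.right_neutral mult_zero_right)

lemma power_card_minus_1_eq_1:
  fixes x :: "'a::{field,finite}"
  assumes "x \<noteq> 0"
  shows "x ^ (card (UNIV :: 'a set) - 1) = 1"
proof -
  let ?U = "UNIV - {0::'a}"
  have "bij_betw ((*) x) ?U ?U"
  proof (rule bij_betw_imageI)
    show "inj_on ((*) x) ?U" using assms by (auto intro: inj_onI)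
    have "z \<in> (*) x ` ?U" if "z \<in> ?U" for z
      using that assms image_eqI[of z "(*) x" "z / x"] by simp
    then show "(*) x ` ?U = ?U" using assms by auto
  qed
  then have "(\<Prod>y\<in>?U. x * y) = (\<Prod>y\<in>?U. y)"
    using prod.reindex_bij_betw[of "(*) x" ?U ?U id] by simp
  then have "x ^ card ?U * (\<Prod>y\<in>?U. y) = 1 * (\<Prod>y\<in>?U. y)"
    by (simp add: prod.distrib)
  moreover have "(\<Prod>y\<in>?U. y) \<noteq> 0" by simp
  ultimately show ?thesis by (simp add: card_Diff_singleton)
qed

lemma power_card_eq_self:
  fixes x :: "'a::{field,finite}"
  shows "x ^ card (UNIV :: 'a set) = x"
proof (cases "x = 0")
  case False
  have "card (UNIV :: 'a set) = Suc (card (UNIV :: 'a set) - 1)"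
    by (simp add: card_gt_0_iff)
  then have "x ^ card (UNIV :: 'a set) = x * x ^ (card (UNIV :: 'a set) - 1)" by (metis power_Suc)
  then show ?thesis using power_card_minus_1_eq_1[OF False] by simp
qed (simp add: card_gt_0_iff)

lemma square_add_char2:
  assumes "(1::'a::comm_ring_1) + 1 = 0"
  shows "((u::'a) + v) ^ 2 = u ^ 2 + v ^ 2"
  using add_self_char2[OF assms, of "u * v"] by (simp add: power2_sum mult.assoc)

lemma sum_square_char2:
  assumes "(1::'a::comm_ring_1) + 1 = 0"
  shows "(\<Sum>i\<in>A. (g i :: 'a)) ^ 2 = (\<Sum>i\<in>A. g i ^ 2)"
  by (induction A rule: infinite_finite_induct) (simp_all add: square_add_char2[OF assms])

lemma power_two_power_add_char2:
  assumes "(1::'a::comm_ring_1) + 1 = 0"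
  shows "((u::'a) + v) ^ (2 ^ i) = u ^ (2 ^ i) + v ^ (2 ^ i)"
proof (induction i)
  case (Suc i)
  have "(u + v) ^ (2 ^ Suc i) = ((u + v) ^ (2 ^ i)) ^ 2"
    by (simp add: power_mult[symmetric] mult.commute)
  also have "\<dots> = u ^ (2 ^ Suc i) + v ^ (2 ^ Suc i)"
    unfolding Suc square_add_char2[OF assms] by (simp add: power_mult[symmetric] mult.commute)
  finally show ?case .
qed simp

lemma tr_add:
  assumes "(1::'a::field) + 1 = 0"
  shows "tr n ((x::'a) + y) = tr n x + tr n y"
  unfolding tr_def by (simp add: power_two_power_add_char2[OF assms] sum.distrib)

text \<open>Squaring permutes the conjugates x^(2^i) cyclically, since x^(2^n) = x.\<close>

lemma tr_square:
  fixes x :: "'a::{field,finite}"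
  assumes card: "card (UNIV :: 'a set) = 2 ^ n" and char2: "(1::'a) + 1 = 0"
  shows "tr n x ^ 2 = tr n x"
proof -
  have "tr n x ^ 2 = (\<Sum>i<n. x ^ 2 ^ Suc i)"
    unfolding tr_def sum_square_char2[OF char2] by (simp add: power_mult[symmetric] mult.commute)
  also have "\<dots> = tr n x"
    using sum.lessThan_Suc_shift[of "\<lambda>i. x ^ 2 ^ i" n] power_card_eq_self[of x]
    unfolding tr_def card by simp
  finally show ?thesis .
qed

lemma trb_add:
  fixes x :: "'a::{field,finite}"
  assumes card: "card (UNIV :: 'a set) = 2 ^ n" and char2: "(1::'a) + 1 = 0"
  shows "trb n (x + y) = (trb n x \<noteq> trb n y)"
proof -
  have tr_01: "tr n z = 0 \<or> tr n z = 1" for z :: 'a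
    using tr_square[OF card char2, of z] by (simp add: power2_eq_square algebra_simps)
  show ?thesis
    using tr_01[of x] tr_01[of y] tr_add[OF char2, of n x y] char2 unfolding trb_def by auto
qed

definition chi :: "bool \<Rightarrow> int" where
  "chi p = (if p then -1 else 1)"

definition maj :: "bool \<Rightarrow> bool \<Rightarrow> bool \<Rightarrow> bool" where
  "maj p q r = (((p \<and> q) \<noteq> (p \<and> r)) \<noteq> (q \<and> r))"

lemma chi_xor: "chi (p \<noteq> q) = chi p * chi q"
  by (simp add: chi_def)

lemma chi_mult_self: "chi p * chi p = 1"
  by (simp add: chi_def)

lemma chi_maj: "2 * chi (maj p q r) = chi p + chi q + chi r - chi p * chi q * chi r"
  by (cases p; cases q; cases r) (simp_all add: chi_def maj_def)

lemma walsh_eq_sum_chi: "walsh n f a = (\<Sum>x\<in>UNIV. chi (f x) * chi (trb n (a * x)))"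
  unfolding walsh_def chi_def by (intro sum.cong) auto

lemma chi_maj_xor:
  "2 * chi (maj (p \<noteq> q1) (p \<noteq> q2) (p \<noteq> q3)) * chi t =
     chi p * chi (t \<noteq> q1) + chi p * chi (t \<noteq> q2) + chi p * chi (t \<noteq> q3)
     - chi p * chi (((t \<noteq> q1) \<noteq> q2) \<noteq> q3)"
  unfolding chi_maj chi_xor by (simp add: algebra_simps chi_mult_self)

lemma abs_chi_sum_eq_2_iff:
  "\<bar>chi d1 + chi d2 + chi d3 - chi d4\<bar> = 2 \<longleftrightarrow> d4 = ((d1 \<noteq> d2) \<noteq> d3)"
  by (cases d1; cases d2; cases d3; cases d4) (simp_all add: chi_def)

lemma chi_sum_in_0_4_iff:
  "chi d1 + chi d2 + chi d3 - chi d4 \<in> {0, 4, -4} \<longleftrightarrow> d4 \<noteq> ((d1 \<noteq> d2) \<noteq> d3)"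
  by (cases d1; cases d2; cases d3; cases d4) (simp_all add: chi_def)

lemma chi_sum_even_parity:
  "d4 = ((d1 \<noteq> d2) \<noteq> d3) \<Longrightarrow>
    chi d1 + chi d2 + chi d3 - chi d4 = 2 * chi (maj d1 d2 d3)"
  unfolding chi_maj by (simp only: chi_xor)

lemma bent_walsh_eq:
  assumes "bent n f"
  shows "walsh n f y = 2 ^ (n div 2) * chi (dual n f y)"
proof -
  have "\<bar>walsh n f y\<bar> = 2 ^ (n div 2)" using assms unfolding bent_def by blast
  then show ?thesis unfolding dual_def chi_def by (auto simp: abs_if split: if_splits)
qed

lemma walsh_maj:
  fixes f :: "'a::{field,finite} \<Rightarrow> bool"
  assumes card: "card (UNIV :: 'a set) = 2 ^ n" and char2: "(1::'a) + 1 = 0"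
  shows "2 * walsh n (\<lambda>x. maj (f x \<noteq> trb n (a1 * x)) (f x \<noteq> trb n (a2 * x))
      (f x \<noteq> trb n (a3 * x))) b
    = walsh n f (b + a1) + walsh n f (b + a2) + walsh n f (b + a3) - walsh n f (b + a1 + a2 + a3)"
  unfolding walsh_eq_sum_chi sum_distrib_left mult.assoc[symmetric] chi_maj_xor
  by (simp add: distrib_right trb_add[OF card char2] sum.distrib sum_subtractf)

lemma bderiv_bderiv_shift:
  fixes g :: "'a::comm_ring_1 \<Rightarrow> bool"
  assumes "(1::'a) + 1 = 0"
  shows "bderiv (a1 + a2) (bderiv (a1 + a3) g) (b + a1) =
    ((g (b + a1) \<noteq> g (b + a2)) \<noteq> (g (b + a3) \<noteq> g (b + a1 + a2 + a3)))"
proof -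
  have "b + a1 + (a1 + a3) = b + a3" "b + a1 + (a1 + a2) = b + a2"
    using add_self_char2[OF assms, of a1] by (simp_all add: algebra_simps)
  moreover have "b + a2 + (a1 + a3) = b + a1 + a2 + a3" by (simp add: algebra_simps)
  ultimately show ?thesis unfolding bderiv_def by (simp only:) auto
qed

lemma all_bderiv_bderiv_iff:
  fixes g :: "'a::comm_ring_1 \<Rightarrow> bool"
  assumes "(1::'a) + 1 = 0"
  shows "(\<forall>x. P (bderiv (a1 + a2) (bderiv (a1 + a3) g) x)) \<longleftrightarrow>
    (\<forall>b. P ((g (b + a1) \<noteq> g (b + a2)) \<noteq> (g (b + a3) \<noteq> g (b + a1 + a2 + a3))))"
proof -
  have shift: "(\<forall>x. Q x) \<longleftrightarrow> (\<forall>b. Q (b + a1))" for Q :: "'a \<Rightarrow> bool"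
    by (metis diff_add_cancel)
  show ?thesis by (subst shift) (simp only: bderiv_bderiv_shift[OF assms])
qed

lemma walsh_maj_of_bent:
  fixes f :: "'a::{field,finite} \<Rightarrow> bool"
  assumes card: "card (UNIV :: 'a set) = 2 ^ n" and char2: "(1::'a) + 1 = 0"
    and "bent n f" and "n = 2 * k" and "0 < k"
  shows "walsh n (\<lambda>x. maj (f x \<noteq> trb n (a1 * x)) (f x \<noteq> trb n (a2 * x))
      (f x \<noteq> trb n (a3 * x))) b
    = 2 ^ (k - 1) * (chi (dual n f (b + a1)) + chi (dual n f (b + a2)) + chi (dual n f (b + a3))
        - chi (dual n f (b + a1 + a2 + a3)))"
proof -
  have "(2::int) ^ (n div 2) = 2 * 2 ^ (k - 1)"
    using assms(4,5) by (simp flip: power_Suc)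
  then show ?thesis
    using walsh_maj[OF card char2, of f a1 a2 a3 b] unfolding bent_walsh_eq[OF assms(3)]
    by (simp add: algebra_simps)
qed

theorem proposition1:
  fixes f :: "'a::{field,finite} \<Rightarrow> bool" and n k :: nat and a1 a2 a3 :: 'a
  assumes card: "card (UNIV :: 'a set) = 2 ^ n"
    and char2: "(1::'a) + 1 = 0"
    and nk: "n = 2 * k" and kpos: "0 < k"
    and fbent: "bent n f"
  defines "f1 \<equiv> (\<lambda>x. f x \<noteq> trb n (a1 * x))"
    and "f2 \<equiv> (\<lambda>x. f x \<noteq> trb n (a2 * x))"
    and "f3 \<equiv> (\<lambda>x. f x \<noteq> trb n (a3 * x))"
  defines "\<sigma> \<equiv> (\<lambda>x. ((f1 x \<and> f2 x) \<noteq> (f1 x \<and> f3 x)) \<noteq> (f2 x \<and> f3 x))"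
  shows "(bent n \<sigma> \<longleftrightarrow> (\<forall>x. \<not> bderiv (a1 + a2) (bderiv (a1 + a3) (dual n f)) x))
    \<and> (semibent n \<sigma> \<longleftrightarrow> (\<forall>x. bderiv (a1 + a2) (bderiv (a1 + a3) (dual n f)) x))
    \<and> (bent n \<sigma> \<longrightarrow> (\<forall>x. dual n \<sigma> x =
          (((dual n f (x + a1) \<and> dual n f (x + a2)) \<noteq> (dual n f (x + a1) \<and> dual n f (x + a3)))
            \<noteq> (dual n f (x + a2) \<and> dual n f (x + a3)))))"
proof -
  define g where "g = dual n f"
  define s where
    "s b = chi (g (b + a1)) + chi (g (b + a2)) + chi (g (b + a3)) - chi (g (b + a1 + a2 + a3))" for b
  define even_parity where
    "even_parity b \<longleftrightarrow> g (b + a1 + a2 + a3) = ((g (b + a1) \<noteq> g (b + a2)) \<noteq> g (b + a3))" for b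
  define c :: int where "c = 2 ^ (k - 1)"
  have "n div 2 = Suc (k - 1)" using nk kpos by simp
  then have c_pos: "c > 0" and two_pow_k: "2 ^ (n div 2) = 2 * c"
    and two_pow_Suc_k: "2 ^ (n div 2 + 1) = 4 * c"
    unfolding c_def by simp_all
  have \<sigma>_maj: "\<sigma> = (\<lambda>x. maj (f x \<noteq> trb n (a1 * x)) (f x \<noteq> trb n (a2 * x))
      (f x \<noteq> trb n (a3 * x)))"
    unfolding \<sigma>_def f1_def f2_def f3_def maj_def ..
  have walsh_\<sigma>: "walsh n \<sigma> b = c * s b" for b
    unfolding \<sigma>_maj walsh_maj_of_bent[OF card char2 fbent nk kpos] c_def s_def g_def ..
  have bent_iff: "bent n \<sigma> \<longleftrightarrow> (\<forall>b. even_parity b)"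
    unfolding bent_def walsh_\<sigma> two_pow_k even_parity_def
    using c_pos abs_chi_sum_eq_2_iff s_def by (simp add: abs_mult)
  have "c * t \<in> {0, 4 * c, - (4 * c)} \<longleftrightarrow> t \<in> {0, 4, -4}" for t
    using c_pos mult_cancel_left[of c t 4] mult_cancel_left[of c t "-4"] by auto
  then have semibent_iff: "semibent n \<sigma> \<longleftrightarrow> (\<forall>b. \<not> even_parity b)"
    unfolding semibent_def walsh_\<sigma> two_pow_Suc_k even_parity_def s_def
    by (simp only: chi_sum_in_0_4_iff)
  have dual_\<sigma>: "dual n \<sigma> b = maj (g (b + a1)) (g (b + a2)) (g (b + a3))" if "even_parity b" for b
    using chi_sum_even_parity[OF that[unfolded even_parity_def]] c_pos
    unfolding dual_def walsh_\<sigma> two_pow_k s_def chi_def by auto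
  have "(\<forall>x. \<not> bderiv (a1 + a2) (bderiv (a1 + a3) g) x) \<longleftrightarrow> (\<forall>b. even_parity b)"
    "(\<forall>x. bderiv (a1 + a2) (bderiv (a1 + a3) g) x) \<longleftrightarrow> (\<forall>b. \<not> even_parity b)"
    using all_bderiv_bderiv_iff[OF char2, where P = Not]
      all_bderiv_bderiv_iff[OF char2, where P = "\<lambda>t. t"]
    unfolding even_parity_def by auto
  with bent_iff semibent_iff dual_\<sigma> show ?thesis
    unfolding g_def[symmetric] maj_def by simp
qed

end
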